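(* Let $q:\mathbb{Z}^n\to\mathbb{Z}$ be a slender unit form admitting a maximal omnipresent root. Then $q$ is weakly non-negative.
   Context: A unit form is $q(x_1,\dots,x_n)=\sum_i x_i^2+\sum_{i<j}q_{ij}x_ix_j$ with $q_{ij}\in\mathbb{Z}$; its bilinear form is $q(x,y)=q(x+y)-q(x)-q(y)$, so $q(e_i,e_j)=q_{ij}$. $q$ is slender if $q(e_i,e_j)\ge -1$ for all $i\ne j$. A root of $q$ is $v\in\mathbb{Z}^n$ with non-negative coordinates and $q(v)=1$; omnipresent if all $v(i)>0$; maximal if every root $w\ge v$ (coordinatewise) equals $v$. $q$ is weakly non-negative if $q(v)\ge0$ for all $v\in\mathbb{N}^n$. *)

theory Defs
  imports Main
begin

text \<open>A unit form in n variables is encoded by n and the integer coefficients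
  Q i j for i < j < n (values of Q outside this range are ignored).
  Vectors of Z^n are functions nat => int, only coordinates i < n matter.\<close>

definition unit_form :: "nat \<Rightarrow> (nat \<Rightarrow> nat \<Rightarrow> int) \<Rightarrow> (nat \<Rightarrow> int) \<Rightarrow> int" where
  "unit_form n Q x = (\<Sum>i<n. (x i)^2) + (\<Sum>j<n. \<Sum>i<j. Q i j * x i * x j)"

definition bil_form :: "nat \<Rightarrow> (nat \<Rightarrow> nat \<Rightarrow> int) \<Rightarrow> (nat \<Rightarrow> int) \<Rightarrow> (nat \<Rightarrow> int) \<Rightarrow> int" where
  "bil_form n Q x y = unit_form n Q (\<lambda>i. x i + y i) - unit_form n Q x - unit_form n Q y"

definition unit_vec :: "nat \<Rightarrow> nat \<Rightarrow> int" where
  "unit_vec i = (\<lambda>k. if k = i then 1 else 0)"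

definition slender :: "nat \<Rightarrow> (nat \<Rightarrow> nat \<Rightarrow> int) \<Rightarrow> bool" where
  "slender n Q \<longleftrightarrow> (\<forall>i<n. \<forall>j<n. i \<noteq> j \<longrightarrow> bil_form n Q (unit_vec i) (unit_vec j) \<ge> -1)"

definition is_root :: "nat \<Rightarrow> (nat \<Rightarrow> nat \<Rightarrow> int) \<Rightarrow> (nat \<Rightarrow> int) \<Rightarrow> bool" where
  "is_root n Q v \<longleftrightarrow> (\<forall>i<n. v i \<ge> 0) \<and> unit_form n Q v = 1"

definition omnipresent :: "nat \<Rightarrow> (nat \<Rightarrow> int) \<Rightarrow> bool" where
  "omnipresent n v \<longleftrightarrow> (\<forall>i<n. v i > 0)"

definition maximal_root :: "nat \<Rightarrow> (nat \<Rightarrow> nat \<Rightarrow> int) \<Rightarrow> (nat \<Rightarrow> int) \<Rightarrow> bool" where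
  "maximal_root n Q v \<longleftrightarrow> is_root n Q v \<and>
     (\<forall>w. is_root n Q w \<and> (\<forall>i<n. v i \<le> w i) \<longrightarrow> (\<forall>i<n. w i = v i))"

definition weakly_nonneg :: "nat \<Rightarrow> (nat \<Rightarrow> nat \<Rightarrow> int) \<Rightarrow> bool" where
  "weakly_nonneg n Q \<longleftrightarrow> (\<forall>v. (\<forall>i<n. v i \<ge> 0) \<longrightarrow> unit_form n Q v \<ge> 0)"

end

theory Submission
  imports Defs
begin

(* Let v be a maximal omnipresent root and d i = q(e_i, v). Maximality forces d >= 0 (otherwise
   v - d i e_i would be a larger root), and sum v_i d_i = q(v, v) = 2 with all v_i >= 1, so d lives
   on at most two vertices. For y >= 0, y <> 0, maximality also rules out q(v + y) = 1. A vector
   x >= 0 with q(x) < 0 becomes, after scaling, some y >= 0 with q(v + y) < 1; take one of least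
   coordinate sum. Removing a unit vector from y bounds each q(e_i, y), which gives
   sum y <= 2 + q(y, v). Splitting y into its parts on and off the support of d, the part on the
   support is controlled by 4 q(p) >= q(p, v)^2, the rest by minimality and slenderness, and the
   two estimates are incompatible. *)

definition sym_coeff :: "(nat \<Rightarrow> nat \<Rightarrow> int) \<Rightarrow> nat \<Rightarrow> nat \<Rightarrow> int" where
  "sym_coeff Q i j = (if i = j then 2 else if i < j then Q i j else Q j i)"

definition polar :: "nat \<Rightarrow> (nat \<Rightarrow> nat \<Rightarrow> int) \<Rightarrow> (nat \<Rightarrow> int) \<Rightarrow> (nat \<Rightarrow> int) \<Rightarrow> int" where
  "polar n Q x y = (\<Sum>i<n. \<Sum>j<n. x i * sym_coeff Q i j * y j)"

lemma sym_coeff_commute: "sym_coeff Q i j = sym_coeff Q j i"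
  by (auto simp: sym_coeff_def)

lemma polar_commute: "polar n Q x y = polar n Q y x"
  unfolding polar_def
  by (subst sum.swap) (simp add: sym_coeff_commute[of Q] mult.commute mult.left_commute)

lemma polar_add_left: "polar n Q (\<lambda>i. x i + z i) y = polar n Q x y + polar n Q z y"
  unfolding polar_def by (simp add: algebra_simps sum.distrib)

lemma polar_add_right: "polar n Q y (\<lambda>i. x i + z i) = polar n Q y x + polar n Q y z"
  using polar_add_left polar_commute by metis

lemma polar_scale_left: "polar n Q (\<lambda>i. c * x i) y = c * polar n Q x y"
  unfolding polar_def by (simp add: sum_distrib_left algebra_simps)

lemma polar_scale_right: "polar n Q y (\<lambda>i. c * x i) = c * polar n Q y x"
  using polar_scale_left polar_commute by metis

lemma polar_cong:
  "(\<forall>i<n. x i = x' i) \<Longrightarrow> (\<forall>i<n. y i = y' i) \<Longrightarrow> polar n Q x y = polar n Q x' y'"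
  unfolding polar_def by (intro sum.cong refl) auto

lemma polar_unit_vec_left:
  assumes "i < n"
  shows "polar n Q (unit_vec i) y = (\<Sum>j<n. sym_coeff Q i j * y j)"
proof -
  have "polar n Q (unit_vec i) y = (\<Sum>k<n. if k = i then (\<Sum>j<n. sym_coeff Q k j * y j) else 0)"
    unfolding polar_def unit_vec_def by (intro sum.cong refl) auto
  with assms show ?thesis by simp
qed

lemma polar_unit_vec:
  assumes "i < n" "j < n"
  shows "polar n Q (unit_vec i) (unit_vec j) = sym_coeff Q i j"
proof -
  have "polar n Q (unit_vec i) (unit_vec j) = (\<Sum>k<n. if k = j then sym_coeff Q i k else 0)"
    unfolding polar_unit_vec_left[OF assms(1)] by (intro sum.cong refl) (auto simp: unit_vec_def)
  with assms(2) show ?thesis by simp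
qed

lemma polar_expand_left: "polar n Q x y = (\<Sum>i<n. x i * polar n Q (unit_vec i) y)"
proof -
  have "polar n Q x y = (\<Sum>i<n. x i * (\<Sum>j<n. sym_coeff Q i j * y j))"
    unfolding polar_def by (simp add: sum_distrib_left mult.assoc)
  then show ?thesis by (simp add: polar_unit_vec_left)
qed

lemma sum_square_diag_offdiag:
  fixes f :: "nat \<Rightarrow> nat \<Rightarrow> int"
  shows "(\<Sum>i<n. \<Sum>j<n. f i j) = (\<Sum>i<n. f i i) + (\<Sum>j<n. \<Sum>i<j. f i j + f j i)"
  by (induction n) (simp_all add: sum.distrib)

lemma polar_self: "polar n Q x x = 2 * unit_form n Q x"
proof -
  have "polar n Q x x = (\<Sum>i<n. x i * sym_coeff Q i i * x i)
      + (\<Sum>j<n. \<Sum>i<j. x i * sym_coeff Q i j * x j + x j * sym_coeff Q j i * x i)"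
    unfolding polar_def by (rule sum_square_diag_offdiag)
  also have "\<dots> = (\<Sum>i<n. 2 * (x i)^2) + (\<Sum>j<n. \<Sum>i<j. 2 * (Q i j * x i * x j))"
    by (intro arg_cong2[where f="(+)"] sum.cong refl) (auto simp: sym_coeff_def power2_eq_square)
  also have "\<dots> = 2 * unit_form n Q x"
    by (simp add: unit_form_def sum_distrib_left algebra_simps)
  finally show ?thesis .
qed

lemma unit_form_add:
  "unit_form n Q (\<lambda>i. x i + y i) = unit_form n Q x + unit_form n Q y + polar n Q x y"
proof -
  have "2 * unit_form n Q (\<lambda>i. x i + y i) = polar n Q x x + polar n Q y y + 2 * polar n Q x y"
    unfolding polar_self[symmetric] polar_add_left polar_add_right
    using polar_commute[of n Q x y] by simp
  then show ?thesis by (simp add: polar_self)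
qed

lemma unit_form_scale: "unit_form n Q (\<lambda>i. c * x i) = c^2 * unit_form n Q x"
proof -
  have "2 * unit_form n Q (\<lambda>i. c * x i) = c^2 * (2 * unit_form n Q x)"
    unfolding polar_self[symmetric] polar_scale_left polar_scale_right by (simp add: power2_eq_square)
  then show ?thesis by simp
qed

lemma unit_form_cong: "(\<forall>i<n. x i = x' i) \<Longrightarrow> unit_form n Q x = unit_form n Q x'"
  using polar_self polar_cong by (metis mult_left_cancel zero_neq_numeral)

lemma unit_form_unit_vec: "i < n \<Longrightarrow> unit_form n Q (unit_vec i) = 1"
  using polar_unit_vec[of i n i Q] polar_self[of n Q "unit_vec i"] by (simp add: sym_coeff_def)

lemma bil_form_eq_polar: "bil_form n Q x y = polar n Q x y"
  by (simp add: bil_form_def unit_form_add)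

lemma slender_sym_coeff_ge:
  assumes "slender n Q" "i < n" "j < n"
  shows "(if i = j then 2 else -1) \<le> sym_coeff Q i j"
proof (cases "i = j")
  case False
  with assms have "-1 \<le> polar n Q (unit_vec i) (unit_vec j)"
    by (simp add: slender_def bil_form_eq_polar)
  with False show ?thesis using polar_unit_vec[OF assms(2,3)] by simp
qed (simp add: sym_coeff_def)

lemma slender_polar_ge:
  assumes "slender n Q" and "\<forall>i<n. 0 \<le> x i" and "\<forall>i<n. 0 \<le> y i"
  shows "3 * (\<Sum>i<n. x i * y i) - (\<Sum>i<n. x i) * (\<Sum>i<n. y i) \<le> polar n Q x y"
proof -
  have "(\<Sum>i<n. \<Sum>j<n. x i * ((if i = j then 3 else 0) - 1) * y j) \<le> polar n Q x y"
    unfolding polar_def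
  proof (intro sum_mono)
    fix i j assume "i \<in> {..<n}" "j \<in> {..<n}"
    with assms have "x i * y j * ((if i = j then 3 else 0) - 1) \<le> x i * y j * sym_coeff Q i j"
      using slender_sym_coeff_ge[of n Q i j] by (intro mult_left_mono) auto
    then show "x i * ((if i = j then 3 else 0) - 1) * y j \<le> x i * sym_coeff Q i j * y j"
      by (simp add: algebra_simps)
  qed
  also have "(\<Sum>i<n. \<Sum>j<n. x i * ((if i = j then 3 else 0) - 1) * y j)
      = (\<Sum>i<n. \<Sum>j<n. (if i = j then 3 * (x i * y j) else 0) - x i * y j)"
    by (intro sum.cong refl) (simp add: algebra_simps)
  also have "\<dots> = 3 * (\<Sum>i<n. x i * y i) - (\<Sum>i<n. x i) * (\<Sum>i<n. y i)"
    by (simp add: sum_subtractf sum_product sum_distrib_left[symmetric])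
  finally show ?thesis .
qed

lemma weighted_sum_eq_two_support:
  fixes v d :: "nat \<Rightarrow> int"
  assumes v: "\<forall>i<n. 1 \<le> v i" and d: "\<forall>i<n. 0 \<le> d i" and sum_eq: "(\<Sum>i<n. v i * d i) = 2"
  obtains a where "a < n" "\<forall>i<n. i \<noteq> a \<longrightarrow> d i = 0" "d a \<le> 2"
  | a b where "a < n" "b < n" "a \<noteq> b" "\<forall>i<n. i \<noteq> a \<and> i \<noteq> b \<longrightarrow> d i = 0" "d a = 1" "d b = 1"
proof -
  define A where "A = {i. i < n \<and> d i \<noteq> 0}"
  have "(\<Sum>i\<in>A. d i) = (\<Sum>i<n. d i)"
    by (rule sum.mono_neutral_left) (auto simp: A_def)
  also have "\<dots> \<le> (\<Sum>i<n. v i * d i)"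
  proof (intro sum_mono)
    fix i assume "i \<in> {..<n}"
    then show "d i \<le> v i * d i"
      using v d mult_right_mono[of 1 "v i" "d i"] by simp
  qed
  finally have sum_A: "(\<Sum>i\<in>A. d i) \<le> 2"
    using sum_eq by simp
  have "int (card A) = (\<Sum>i\<in>A. 1)"
    by simp
  also have "\<dots> \<le> (\<Sum>i\<in>A. d i)"
    using d by (intro sum_mono) (auto simp: A_def)
  finally have "card A \<le> 2"
    using sum_A by linarith
  moreover have "A \<noteq> {}"
  proof
    assume "A = {}"
    then have "(\<Sum>i<n. v i * d i) = 0"
      by (intro sum.neutral) (auto simp: A_def)
    with sum_eq show False by simp
  qed
  then have "card A \<noteq> 0"
    by (simp add: A_def)
  ultimately consider "card A = 1" | "card A = 2"
    by linarith
  then show thesis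
  proof cases
    case 1
    then obtain a where "A = {a}"
      by (auto simp: card_1_singleton_iff)
    then have "a < n" "\<forall>i<n. i \<noteq> a \<longrightarrow> d i = 0"
      by (auto simp: A_def)
    moreover have "d a \<le> 2"
      using sum_A \<open>A = {a}\<close> by simp
    ultimately show thesis
      by (rule that(1))
  next
    case 2
    then obtain a b where ab: "A = {a, b}" "a \<noteq> b"
      by (auto simp: card_2_iff)
    then have "a \<in> A" "b \<in> A"
      by auto
    then have "a < n" "b < n" "1 \<le> d a" "1 \<le> d b"
      using d by (auto simp: A_def)
    moreover have "d a + d b \<le> 2"
      using sum_A ab by simp
    moreover have "\<forall>i<n. i \<noteq> a \<and> i \<noteq> b \<longrightarrow> d i = 0"
      using ab(1) by (auto simp: A_def)
    ultimately show thesis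
      using that(2) ab(2) by simp
  qed
qed

locale maximal_omnipresent_root =
  fixes n :: nat and Q :: "nat \<Rightarrow> nat \<Rightarrow> int" and v :: "nat \<Rightarrow> int"
  assumes slender: "slender n Q"
    and maximal: "maximal_root n Q v"
    and omnipresent: "omnipresent n v"
begin

definition d :: "nat \<Rightarrow> int" where
  "d i = polar n Q (unit_vec i) v"

(* shift z = q(v + z) - 1, see unit_form_v_add. *)
definition shift :: "(nat \<Rightarrow> int) \<Rightarrow> int" where
  "shift z = unit_form n Q z + polar n Q z v"

lemma v_ge_one: "i < n \<Longrightarrow> 1 \<le> v i"
  using omnipresent by (simp add: omnipresent_def int_one_le_iff_zero_less)

lemma unit_form_v: "unit_form n Q v = 1"
  using maximal by (simp add: maximal_root_def is_root_def)

lemma unit_form_v_add: "unit_form n Q (\<lambda>i. v i + z i) = 1 + shift z"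
  by (simp add: unit_form_add unit_form_v shift_def polar_commute)

lemma eq_v_if_root_above_v:
  assumes "\<forall>i<n. v i \<le> w i" and "unit_form n Q w = 1"
  shows "\<forall>i<n. w i = v i"
proof -
  have "is_root n Q w"
    using assms v_ge_one by (force simp: is_root_def)
  moreover have "\<forall>w. is_root n Q w \<and> (\<forall>i<n. v i \<le> w i) \<longrightarrow> (\<forall>i<n. w i = v i)"
    using maximal by (simp add: maximal_root_def)
  ultimately show ?thesis
    using assms(1) by blast
qed

lemma eq_zero_if_shift_eq_zero:
  assumes "\<forall>i<n. 0 \<le> z i" and "shift z = 0"
  shows "\<forall>i<n. z i = 0"
  using eq_v_if_root_above_v[of "\<lambda>i. v i + z i"] assms by (simp add: unit_form_v_add)

lemma polar_v: "polar n Q z v = (\<Sum>i<n. z i * d i)"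
  unfolding d_def by (rule polar_expand_left)

lemma shift_add: "shift (\<lambda>i. x i + y i) = shift x + shift y + polar n Q x y"
  by (simp add: shift_def unit_form_add polar_add_left)

lemma shift_unit_vec: "i < n \<Longrightarrow> shift (unit_vec i) = 1 + d i"
  by (simp add: shift_def unit_form_unit_vec d_def)

lemma d_nonneg: "i < n \<Longrightarrow> 0 \<le> d i"
proof (rule ccontr)
  assume i: "i < n" and "\<not> 0 \<le> d i"
  then have t: "0 < - d i" by simp
  have "shift (\<lambda>j. - d i * unit_vec i j) = 0"
    unfolding shift_def unit_form_scale polar_scale_left unit_form_unit_vec[OF i]
    by (simp add: d_def power2_eq_square)
  then have "\<forall>j<n. - d i * unit_vec i j = 0"
    using t by (intro eq_zero_if_shift_eq_zero) (auto simp: unit_vec_def)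
  with i t show False
    by (auto simp: unit_vec_def)
qed

lemma sum_v_times_d: "(\<Sum>i<n. v i * d i) = 2"
  using polar_self[of n Q v] by (simp add: polar_v unit_form_v)

lemma polar_v_nonneg: "\<forall>i<n. 0 \<le> z i \<Longrightarrow> 0 \<le> polar n Q z v"
  unfolding polar_v using d_nonneg by (intro sum_nonneg) auto

lemma shift_nonzero:
  assumes "\<forall>i<n. 0 \<le> z i" and "0 < (\<Sum>i<n. z i)"
  shows "shift z \<noteq> 0"
  using eq_zero_if_shift_eq_zero[OF assms(1)] assms(2) by force

lemma shift_ge_one_if_sum_le_two:
  assumes nonneg: "\<forall>i<n. 0 \<le> z i" and pos: "0 < (\<Sum>i<n. z i)" and le2: "(\<Sum>i<n. z i) \<le> 2"
  shows "1 \<le> shift z"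
proof -
  define s where "s = (\<Sum>i<n. z i)"
  have le_square: "x \<le> x * x" if "0 \<le> x" for x :: int
    using that mult_left_mono[of 1 x x] by (cases "x = 0") auto
  have "s \<le> (\<Sum>i<n. z i * z i)"
    unfolding s_def using nonneg le_square by (intro sum_mono) auto
  then have "3 * s - s * s \<le> 2 * unit_form n Q z"
    using slender_polar_ge[OF slender nonneg nonneg] by (simp add: s_def polar_self)
  moreover have "2 \<le> 3 * s - s * s"
  proof -
    have "s = 1 \<or> s = 2"
      using pos le2 unfolding s_def by presburger
    then show ?thesis by auto
  qed
  ultimately show ?thesis
    using polar_v_nonneg[OF nonneg] by (simp add: shift_def)
qed

lemma polar_unit_vec_le_shift:
  assumes nonneg: "\<forall>j<n. 0 \<le> y j" and i: "i < n" "0 < y i"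
    and shift_ge: "1 \<le> shift (\<lambda>j. y j - unit_vec i j)"
  shows "polar n Q (unit_vec i) y \<le> shift y - d i"
proof -
  define z where "z = (\<lambda>j. y j - unit_vec i j)"
  have y_eq: "y = (\<lambda>j. z j + unit_vec i j)"
    by (simp add: z_def)
  have "shift y = shift z + (1 + d i) + polar n Q z (unit_vec i)"
    by (subst y_eq) (simp add: shift_add shift_unit_vec[OF i(1)])
  moreover have "polar n Q (unit_vec i) y = polar n Q z (unit_vec i) + 2"
    by (subst y_eq) (simp add: polar_add_right polar_commute polar_unit_vec[OF i(1) i(1)] sym_coeff_def)
  ultimately show ?thesis
    using shift_ge by (simp add: z_def)
qed

lemma shift_times_two_minus_sum_le:
  assumes nonneg: "\<forall>i<n. 0 \<le> y i"
    and rows: "\<forall>i<n. 0 < y i \<longrightarrow> polar n Q (unit_vec i) y \<le> shift y - d i"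
  shows "shift y * (2 - (\<Sum>i<n. y i)) \<le> polar n Q y v"
proof -
  have "2 * shift y - 2 * polar n Q y v = polar n Q y y"
    by (simp add: shift_def polar_self)
  also have "\<dots> = (\<Sum>i<n. y i * polar n Q (unit_vec i) y)"
    by (rule polar_expand_left)
  also have "\<dots> \<le> (\<Sum>i<n. y i * (shift y - d i))"
  proof (intro sum_mono)
    fix i assume "i \<in> {..<n}"
    with nonneg rows show "y i * polar n Q (unit_vec i) y \<le> y i * (shift y - d i)"
      by (cases "y i = 0") (auto intro: mult_left_mono)
  qed
  also have "\<dots> = shift y * (\<Sum>i<n. y i) - polar n Q y v"
    by (simp add: polar_v algebra_simps sum_subtractf sum_distrib_right)
  finally show ?thesis
    by (simp add: algebra_simps)
qed

lemma polar_v_squared_le: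
  assumes nonneg: "\<forall>i<n. 0 \<le> p i" and supp: "\<forall>i<n. d i = 0 \<longrightarrow> p i = 0"
  shows "(polar n Q p v)^2 \<le> 4 * unit_form n Q p"
proof -
  have "\<forall>i<n. 1 \<le> v i" "\<forall>i<n. 0 \<le> d i"
    using v_ge_one d_nonneg by auto
  then show ?thesis
    using sum_v_times_d
  proof (rule weighted_sum_eq_two_support)
    fix a assume a: "a < n" "\<forall>i<n. i \<noteq> a \<longrightarrow> d i = 0" "d a \<le> 2"
    have p_eq: "\<forall>i<n. p i = p a * unit_vec a i"
      using a(2) supp by (auto simp: unit_vec_def)
    have "polar n Q p v = p a * d a" "unit_form n Q p = (p a)^2"
      using polar_cong[OF p_eq, of v v Q] unit_form_cong[OF p_eq, of Q]
      by (simp_all add: polar_scale_left d_def unit_form_scale unit_form_unit_vec[OF a(1)])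
    moreover have "(p a * d a)^2 \<le> (p a * 2)^2"
      using nonneg a d_nonneg by (intro power_mono mult_left_mono) auto
    ultimately show ?thesis
      by (simp add: power_mult_distrib)
  next
    fix a b assume ab: "a < n" "b < n" "a \<noteq> b" "\<forall>i<n. i \<noteq> a \<and> i \<noteq> b \<longrightarrow> d i = 0"
      "d a = 1" "d b = 1"
    have p_eq: "\<forall>i<n. p i = p a * unit_vec a i + p b * unit_vec b i"
      using ab(3,4) supp by (auto simp: unit_vec_def)
    have "polar n Q p v = p a + p b"
      using polar_cong[OF p_eq, of v v Q] ab(5,6)
      by (simp add: polar_add_left polar_scale_left d_def)
    moreover have "unit_form n Q p = (p a)^2 + (p b)^2 + p a * p b * sym_coeff Q a b"
      using unit_form_cong[OF p_eq, of Q]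
      by (simp add: unit_form_add unit_form_scale unit_form_unit_vec ab(1,2) polar_scale_left
          polar_scale_right polar_unit_vec algebra_simps)
    moreover have "p a * p b * (-1) \<le> p a * p b * sym_coeff Q a b"
      using nonneg ab slender_sym_coeff_ge[OF slender ab(1,2)] by (intro mult_left_mono) auto
    moreover have "0 \<le> (p a - p b)^2"
      by simp
    ultimately show ?thesis
      by (simp add: power2_eq_square algebra_simps)
  qed
qed

lemma no_minimal_nonpositive_shift:
  assumes nonneg: "\<forall>i<n. 0 \<le> y i" and neg: "shift y \<le> -1"
    and three_le: "3 \<le> (\<Sum>i<n. y i)" and sum_le: "(\<Sum>i<n. y i) \<le> 2 + polar n Q y v"
    and smaller: "\<And>z. \<forall>i<n. 0 \<le> z i \<Longrightarrow> 0 < (\<Sum>i<n. z i) \<Longrightarrow>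
        (\<Sum>i<n. z i) < (\<Sum>i<n. y i) \<Longrightarrow> 1 \<le> shift z"
  shows False
proof -
  define p where "p = (\<lambda>i. if d i = 0 then 0 else y i)"
  define r where "r = (\<lambda>i. if d i = 0 then y i else 0)"
  define m where "m = polar n Q p v"
  have y_eq: "y = (\<lambda>i. p i + r i)"
    by (auto simp: p_def r_def)
  have p_nonneg: "\<forall>i<n. 0 \<le> p i" and r_nonneg: "\<forall>i<n. 0 \<le> r i"
    using nonneg by (simp_all add: p_def r_def)
  have "polar n Q r v = 0"
    unfolding polar_v by (intro sum.neutral) (simp add: r_def)
  then have m_eq: "polar n Q y v = m"
    and shift_eq: "shift y = unit_form n Q p + m + shift r + polar n Q p r"
    by (subst y_eq, simp add: polar_add_left m_def shift_add shift_def)+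
  have sum_eq: "(\<Sum>i<n. y i) = (\<Sum>i<n. p i) + (\<Sum>i<n. r i)"
    by (subst y_eq) (simp add: sum.distrib)
  have "m^2 \<le> 4 * unit_form n Q p"
    unfolding m_def using p_nonneg by (intro polar_v_squared_le) (auto simp: p_def)
  have polar_pr: "- ((\<Sum>i<n. p i) * (\<Sum>i<n. r i)) \<le> polar n Q p r"
    using slender_polar_ge[OF slender p_nonneg r_nonneg] p_nonneg r_nonneg
      sum_nonneg[of "{..<n}" "\<lambda>i. p i * r i"] by fastforce
  have "- (m^2 + 4 * m) \<le> 4 * (shift r + polar n Q p r)"
  proof (cases "(\<Sum>i<n. r i) = 0")
    case True
    have "0 \<le> 3 * (\<Sum>i<n. r i * r i)"
      using r_nonneg by (simp add: sum_nonneg)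
    then have "0 \<le> shift r"
      using slender_polar_ge[OF slender r_nonneg r_nonneg] polar_v_nonneg[OF r_nonneg] True
      by (simp add: polar_self shift_def)
    moreover have "0 \<le> m"
      unfolding m_def using p_nonneg by (rule polar_v_nonneg)
    moreover have "0 \<le> polar n Q p r"
      using polar_pr True by simp
    moreover have "0 \<le> m^2"
      by simp
    ultimately show ?thesis
      by (smt (verit))
  next
    case False
    have "(\<Sum>i<n. p i) \<noteq> 0"
    proof
      assume "(\<Sum>i<n. p i) = 0"
      then have "\<forall>i<n. p i = 0"
        using p_nonneg sum_nonneg_eq_0_iff[of "{..<n}" p] by auto
      then have "m = 0"
        by (simp add: m_def polar_v)
      with three_le sum_le m_eq show False by simp
    qed
    then have sum_p_pos: "0 < (\<Sum>i<n. p i)"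
      using p_nonneg sum_nonneg[of "{..<n}" p] by fastforce
    moreover have "0 < (\<Sum>i<n. r i)"
      using False r_nonneg sum_nonneg[of "{..<n}" r] by fastforce
    ultimately have "1 \<le> shift r"
      using smaller[OF r_nonneg] sum_eq by simp
    moreover have "(\<Sum>i<n. p i) * (\<Sum>i<n. r i) \<le> (\<Sum>i<n. p i) * (2 + m - (\<Sum>i<n. p i))"
      using sum_le sum_eq m_eq sum_p_pos by (intro mult_left_mono) auto
    (* bounds (sum p) (2 + m - sum p) by (m + 2)^2 / 4 *)
    moreover have "0 \<le> (2 * (\<Sum>i<n. p i) - m - 2)^2"
      by simp
    ultimately show ?thesis
      using polar_pr by (simp add: power2_eq_square algebra_simps)
  qed
  with \<open>m^2 \<le> 4 * unit_form n Q p\<close> shift_eq neg show False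
    by simp
qed

lemma shift_ge_one:
  "\<forall>i<n. 0 \<le> y i \<Longrightarrow> 0 < (\<Sum>i<n. y i) \<Longrightarrow> 1 \<le> shift y"
proof (induction "nat (\<Sum>i<n. y i)" arbitrary: y rule: less_induct)
  case less
  show ?case
  proof (rule ccontr)
    assume "\<not> 1 \<le> shift y"
    with shift_nonzero[OF less.prems] have neg: "shift y \<le> -1"
      by simp
    have smaller: "1 \<le> shift z"
      if "\<forall>i<n. 0 \<le> z i" "0 < (\<Sum>i<n. z i)" "(\<Sum>i<n. z i) < (\<Sum>i<n. y i)" for z
      using less.hyps that by simp
    have three_le: "3 \<le> (\<Sum>i<n. y i)"
      using shift_ge_one_if_sum_le_two[OF less.prems] neg by linarith
    have "\<forall>i<n. 0 < y i \<longrightarrow> polar n Q (unit_vec i) y \<le> shift y - d i"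
    proof (intro allI impI)
      fix i assume i: "i < n" "0 < y i"
      have "(\<Sum>j<n. y j - unit_vec i j) = (\<Sum>j<n. y j) - 1"
        using i(1) by (simp add: sum_subtractf unit_vec_def)
      then have "1 \<le> shift (\<lambda>j. y j - unit_vec i j)"
        using smaller[of "\<lambda>j. y j - unit_vec i j"] less.prems(1) i three_le
        by (simp add: unit_vec_def)
      with less.prems(1) i show "polar n Q (unit_vec i) y \<le> shift y - d i"
        by (rule polar_unit_vec_le_shift)
    qed
    then have "shift y * (2 - (\<Sum>i<n. y i)) \<le> polar n Q y v"
      by (rule shift_times_two_minus_sum_le[OF less.prems(1)])
    moreover have "(\<Sum>i<n. y i) - 2 \<le> shift y * (2 - (\<Sum>i<n. y i))"
      using neg three_le mult_right_mono_neg[of "shift y" "-1" "2 - (\<Sum>i<n. y i)"] by simp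
    ultimately show False
      using no_minimal_nonpositive_shift[OF less.prems(1) neg three_le _ smaller] by simp
  qed
qed

lemma unit_form_weakly_nonneg: "weakly_nonneg n Q"
  unfolding weakly_nonneg_def
proof (intro allI impI)
  fix x :: "nat \<Rightarrow> int"
  assume nonneg: "\<forall>i<n. 0 \<le> x i"
  show "0 \<le> unit_form n Q x"
  proof (rule ccontr)
    assume "\<not> 0 \<le> unit_form n Q x"
    then have neg: "unit_form n Q x \<le> -1"
      by simp
    have "(\<Sum>i<n. x i) \<noteq> 0"
    proof
      assume "(\<Sum>i<n. x i) = 0"
      then have "\<forall>i<n. x i = 0"
        using nonneg sum_nonneg_eq_0_iff[of "{..<n}" x] by auto
      then have "unit_form n Q x = unit_form n Q (\<lambda>_. 0)"
        by (rule unit_form_cong)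
      with neg show False
        by (simp add: unit_form_def)
    qed
    then have "0 < (\<Sum>i<n. x i)"
      using nonneg sum_nonneg[of "{..<n}" x] by fastforce
    define c where "c = polar n Q x v + 1"
    have c: "1 \<le> c"
      using polar_v_nonneg[OF nonneg] by (simp add: c_def)
    have "1 \<le> shift (\<lambda>i. c * x i)"
      using nonneg c \<open>0 < (\<Sum>i<n. x i)\<close>
      by (intro shift_ge_one) (simp_all add: sum_distrib_left[symmetric])
    also have "shift (\<lambda>i. c * x i) = c^2 * unit_form n Q x + c * (c - 1)"
      by (simp add: shift_def unit_form_scale polar_scale_left c_def)
    also have "\<dots> \<le> - c"
      using neg mult_left_mono[OF neg, of "c^2"] by (simp add: power2_eq_square algebra_simps)
    finally show False
      using c by simp
  qed
qed

end

theorem theorem1p8: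
  fixes n :: nat and Q :: "nat \<Rightarrow> nat \<Rightarrow> int"
  assumes "slender n Q"
    and "\<exists>v. maximal_root n Q v \<and> omnipresent n v"
  shows "weakly_nonneg n Q"
proof -
  obtain v where "maximal_root n Q v" "omnipresent n v"
    using assms(2) by blast
  with assms(1) interpret maximal_omnipresent_root n Q v
    by unfold_locales
  show ?thesis
    by (rule unit_form_weakly_nonneg)
qed

end
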